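(* Let $\lambda$ be a nonzero real number and let $p$ be a positive integer. For any integer $n\ge1$, \[ \sum_{k=1}^{\infty}\frac{n\,H_{k,\lambda}^{(p)}}{\binom{k+n-1}{n}(k+n)}=\sum_{k=1}^{\infty}\frac{(-\lambda)^{k-1}(1)_{k,1/\lambda}}{(k-1)!\,k^{p}\binom{k+n-1}{n}}. \]
   Context: For real $x$ and $\mu\neq 0$, set $(x)_{0,\mu}=1$ and $(x)_{n,\mu}=x(x-\mu)\cdots(x-(n-1)\mu)$ for $n\ge1$. The degenerate higher-order harmonic numbers are $H_{0,\lambda}^{(k)}=0$ and $H_{n,\lambda}^{(k)}=\sum_{l=1}^{n}\frac{(-\lambda)^{l-1}(1)_{l,1/\lambda}}{l^{k}(l-1)!}$ for $n\ge1$. *)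

theory Defs
  imports "HOL-Analysis.Analysis"
begin

definition gen_falling :: "real \<Rightarrow> nat \<Rightarrow> real \<Rightarrow> real" where
  "gen_falling x n mu = (\<Prod>i<n. x - real i * mu)"

definition deg_harm :: "nat \<Rightarrow> real \<Rightarrow> nat \<Rightarrow> real" where
  "deg_harm n lam k =
     (\<Sum>l=1..n. (-lam)^(l-1) * gen_falling 1 l (1/lam) / (real l ^ k * fact (l-1)))"

end

theory Submission
  imports Defs
begin

(* Put a k = (1 - lam)_k / (k! (k+1)^p), so that (-lam)^k (1)_{k+1,1/lam} = (1 - lam)_k and the
   degenerate harmonic number H_{k+1} is the partial sum A k = a 0 + ... + a k. With
   B k = 1 / C(k+n, n) one has n / (C(k+n, n) (k+n+1)) = B k - B (k+1), so the left-hand series,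
   sum of A k (B k - B (k+1)), is the summation-by-parts transform of the right-hand series, sum of
   a k B k; their partial sums up to N differ by A N B (N+1).
   B decreases to 0, and (1 - lam)_k, hence a k, has eventually constant sign; replacing a by -a we
   may assume a k >= 0 eventually, so that A k increases from some point on. If the A k stay
   negative, they are bounded and A N B (N+1) tends to 0. Otherwise all terms eventually become
   nonnegative, and A N B (N+1) is at most the tail of the left-hand series beyond N; that series
   converges as soon as either one does, its partial sums being dominated by those of the other.
   Hence the two series converge together with equal sums, or both diverge and both sides are the
   same junk value of suminf. *)

lemma summation_by_parts_atMost:
  fixes a B :: "nat \<Rightarrow> 'a::ring"
  shows "(\<Sum>k\<le>N. (\<Sum>i\<le>k. a i) * (B k - B (Suc k)))
           = (\<Sum>k\<le>N. a k * B k) - (\<Sum>i\<le>N. a i) * B (Suc N)"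
  by (induction N) (simp_all add: algebra_simps)

lemma sums_summation_by_parts_iff:
  fixes a B :: "nat \<Rightarrow> 'a::real_normed_algebra"
  assumes "(\<lambda>N. (\<Sum>i\<le>N. a i) * B (Suc N)) \<longlonglongrightarrow> 0"
  shows "(\<lambda>k. (\<Sum>i\<le>k. a i) * (B k - B (Suc k))) sums s \<longleftrightarrow> (\<lambda>k. a k * B k) sums s"
proof -
  let ?S = "\<lambda>N. \<Sum>k\<le>N. (\<Sum>i\<le>k. a i) * (B k - B (Suc k))"
  let ?D = "\<lambda>N. (\<Sum>i\<le>N. a i) * B (Suc N)"
  have "(\<lambda>N. \<Sum>k\<le>N. a k * B k) = (\<lambda>N. ?S N + ?D N)"
    by (simp add: summation_by_parts_atMost)
  then show ?thesis
    unfolding sums_def_le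
    using tendsto_add[OF _ assms, of ?S s] tendsto_diff[OF _ assms, of "\<lambda>N. ?S N + ?D N" s]
    by auto
qed

(* Unlike sums_iff, this also applies when neither series converges. *)
lemma suminf_eq_if_sums_iff:
  assumes "\<And>s. f sums s \<longleftrightarrow> g sums s"
  shows "suminf f = suminf g"
proof -
  have "(sums) f = (sums) g"
    using assms by blast
  then show ?thesis
    by (simp add: suminf_def)
qed

lemma sum_atMost_mono:
  fixes a :: "nat \<Rightarrow> 'a::ordered_comm_monoid_add"
  assumes "\<And>k. m < k \<Longrightarrow> 0 \<le> a k" and "m \<le> n"
  shows "(\<Sum>i\<le>m. a i) \<le> (\<Sum>i\<le>n. a i)"
  by (rule sum_mono2) (use assms in auto)

context
  fixes B :: "nat \<Rightarrow> real"
  assumes decseq_B: "decseq B" and B_tendsto_0: "B \<longlonglongrightarrow> 0"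
begin

private lemma B_nonneg: "0 \<le> B k"
  using decseq_ge[OF decseq_B B_tendsto_0] .

lemma summation_by_parts_remainder_le_tail:
  fixes a :: "nat \<Rightarrow> real"
  assumes "\<And>i. N < i \<Longrightarrow> 0 \<le> a i"
    and "(\<lambda>i. (\<Sum>j\<le>i + Suc N. a j) * (B (i + Suc N) - B (Suc (i + Suc N)))) sums t"
  shows "(\<Sum>i\<le>N. a i) * B (Suc N) \<le> t"
proof (rule sums_le[OF _ _ assms(2)])
  show "(\<lambda>i. (\<Sum>j\<le>N. a j) * (B (i + Suc N) - B (Suc (i + Suc N)))) sums ((\<Sum>j\<le>N. a j) * B (Suc N))"
    using sums_mult[OF telescope_sums'[OF LIMSEQ_ignore_initial_segment[OF B_tendsto_0, of "Suc N"]]]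
    by (simp only: add_Suc add_0 diff_zero)
  fix i
  have "(\<Sum>j\<le>N. a j) \<le> (\<Sum>j\<le>i + Suc N. a j)"
    by (rule sum_atMost_mono) (auto simp: assms(1))
  moreover have "0 \<le> B (i + Suc N) - B (Suc (i + Suc N))"
    using decseq_B by (simp add: decseq_Suc_iff)
  ultimately show "(\<Sum>j\<le>N. a j) * (B (i + Suc N) - B (Suc (i + Suc N)))
      \<le> (\<Sum>j\<le>i + Suc N. a j) * (B (i + Suc N) - B (Suc (i + Suc N)))"
    by (rule mult_right_mono)
qed

lemma summation_by_parts_remainder_tendsto_zero:
  fixes a :: "nat \<Rightarrow> real"
  assumes a_nonneg: "\<And>k. k0 < k \<Longrightarrow> 0 \<le> a k" and "0 \<le> (\<Sum>i\<le>k0. a i)"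
    and summable: "summable (\<lambda>k. (\<Sum>i\<le>k. a i) * (B k - B (Suc k)))"
  shows "(\<lambda>N. (\<Sum>i\<le>N. a i) * B (Suc N)) \<longlonglongrightarrow> 0"
proof (rule Lim_null_comparison)
  let ?S = "\<lambda>k. (\<Sum>i\<le>k. a i) * (B k - B (Suc k))"
  define T where "T N = suminf ?S - (\<Sum>k<N. ?S k)" for N
  have tail_sums: "(\<lambda>i. ?S (i + N)) sums T N" for N
    unfolding T_def by (rule sums_split_initial_segment[OF summable_sums[OF summable]])
  have "T \<longlonglongrightarrow> suminf ?S - suminf ?S"
    unfolding T_def by (intro tendsto_diff tendsto_const summable_LIMSEQ[OF summable])
  then show "(\<lambda>N. T (Suc N)) \<longlonglongrightarrow> 0"
    by (simp add: LIMSEQ_Suc)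
  show "\<forall>\<^sub>F N in sequentially. norm ((\<Sum>i\<le>N. a i) * B (Suc N)) \<le> T (Suc N)"
  proof (rule eventually_sequentiallyI)
    fix N assume "k0 \<le> N"
    then have "(\<Sum>i\<le>k0. a i) \<le> (\<Sum>i\<le>N. a i)"
      by (intro sum_atMost_mono a_nonneg)
    then have "0 \<le> (\<Sum>i\<le>N. a i)"
      using assms(2) by linarith
    moreover have "(\<Sum>i\<le>N. a i) * B (Suc N) \<le> T (Suc N)"
      by (rule summation_by_parts_remainder_le_tail[OF _ tail_sums]) (use \<open>k0 \<le> N\<close> a_nonneg in simp)
    ultimately show "norm ((\<Sum>i\<le>N. a i) * B (Suc N)) \<le> T (Suc N)"
      using B_nonneg by simp
  qed
qed

lemma summable_summation_by_parts:
  fixes a :: "nat \<Rightarrow> real"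
  assumes a_nonneg: "\<And>k. k0 < k \<Longrightarrow> 0 \<le> a k" and "0 \<le> (\<Sum>i\<le>k0. a i)"
    and summable: "summable (\<lambda>k. a k * B k)"
  shows "summable (\<lambda>k. (\<Sum>i\<le>k. a i) * (B k - B (Suc k)))"
proof -
  let ?P = "\<lambda>N. \<Sum>k\<le>N. (\<Sum>i\<le>k. a i) * (B k - B (Suc k))"
  have A_nonneg: "0 \<le> (\<Sum>i\<le>N. a i)" if "k0 \<le> N" for N
    using sum_atMost_mono[of k0 a N] a_nonneg that assms(2) by fastforce
  have "incseq (\<lambda>m. ?P (m + k0))"
  proof (rule incseq_SucI)
    fix m
    have "0 \<le> (\<Sum>i\<le>Suc m + k0. a i) * (B (Suc m + k0) - B (Suc (Suc m + k0)))"
      using A_nonneg[of "Suc m + k0"] decseq_B by (simp add: decseq_Suc_iff)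
    then show "?P (m + k0) \<le> ?P (Suc m + k0)"
      by simp
  qed
  moreover obtain M where M: "\<And>N. (\<Sum>k\<le>N. a k * B k) \<le> M"
    using Bseq_bdd_above[OF convergent_imp_Bseq[OF summable[unfolded summable_iff_convergent']]]
    by (auto simp: bdd_above_def)
  have "?P N \<le> M" if "k0 \<le> N" for N
    using M[of N] mult_nonneg_nonneg[OF A_nonneg[OF that] B_nonneg[of "Suc N"]]
    by (simp add: summation_by_parts_atMost)
  then have "bdd_above (range (\<lambda>m. ?P (m + k0)))"
    by (intro bdd_aboveI2[where M = M]) simp
  ultimately obtain L where "(\<lambda>m. ?P (m + k0)) \<longlonglongrightarrow> L"
    using LIMSEQ_incseq_SUP by blast
  then show ?thesis
    unfolding summable_def sums_def_le by (blast intro: LIMSEQ_offset)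
qed

lemma sums_summation_by_parts_iff_eventually_nonneg:
  fixes a :: "nat \<Rightarrow> real"
  assumes "\<forall>\<^sub>F k in sequentially. 0 \<le> a k"
  shows "(\<lambda>k. (\<Sum>i\<le>k. a i) * (B k - B (Suc k))) sums s \<longleftrightarrow> (\<lambda>k. a k * B k) sums s"
proof -
  obtain K where a_nonneg: "\<And>k. K \<le> k \<Longrightarrow> 0 \<le> a k"
    using assms by (auto simp: eventually_sequentially)
  have remainder_tendsto_0: "(\<lambda>N. (\<Sum>i\<le>N. a i) * B (Suc N)) \<longlonglongrightarrow> 0"
    if "summable (\<lambda>k. (\<Sum>i\<le>k. a i) * (B k - B (Suc k))) \<or> summable (\<lambda>k. a k * B k)"
  proof (cases "\<exists>k0\<ge>K. 0 \<le> (\<Sum>i\<le>k0. a i)")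
    case True
    then obtain k0 where "K \<le> k0" and A_nonneg: "0 \<le> (\<Sum>i\<le>k0. a i)"
      by blast
    then have a_nonneg_after_k0: "\<And>k. k0 < k \<Longrightarrow> 0 \<le> a k"
      using a_nonneg by simp
    from that have "summable (\<lambda>k. (\<Sum>i\<le>k. a i) * (B k - B (Suc k)))"
    proof
      assume "summable (\<lambda>k. a k * B k)"
      then show ?thesis
        by (rule summable_summation_by_parts[of k0 a, rotated 2]) (use a_nonneg_after_k0 A_nonneg in auto)
    qed
    then show ?thesis
      by (rule summation_by_parts_remainder_tendsto_zero[of k0 a, rotated 2])
        (use a_nonneg_after_k0 A_nonneg in auto)
  next
    case False
    have "\<bar>\<Sum>i\<le>N. a i\<bar> \<le> \<bar>\<Sum>i\<le>K. a i\<bar>" if "K \<le> N" for N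
    proof -
      have "(\<Sum>i\<le>K. a i) \<le> (\<Sum>i\<le>N. a i)"
        by (rule sum_atMost_mono) (use a_nonneg that in auto)
      moreover have "(\<Sum>i\<le>N. a i) < 0"
        using False that by auto
      ultimately show ?thesis
        by linarith
    qed
    then have "\<forall>\<^sub>F N in sequentially.
        norm ((\<Sum>i\<le>N. a i) * B (Suc N)) \<le> \<bar>\<Sum>i\<le>K. a i\<bar> * B (Suc N)"
      using B_nonneg by (intro eventually_sequentiallyI[of K]) (simp add: abs_mult mult_right_mono)
    moreover have "(\<lambda>N. \<bar>\<Sum>i\<le>K. a i\<bar> * B (Suc N)) \<longlonglongrightarrow> 0"
      using B_tendsto_0 by (intro tendsto_mult_right_zero) (simp add: LIMSEQ_Suc)
    ultimately show ?thesis
      by (rule Lim_null_comparison)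
  qed
  show ?thesis
  proof
    assume S: "(\<lambda>k. (\<Sum>i\<le>k. a i) * (B k - B (Suc k))) sums s"
    then have "(\<lambda>N. (\<Sum>i\<le>N. a i) * B (Suc N)) \<longlonglongrightarrow> 0"
      by (intro remainder_tendsto_0 disjI1 sums_summable)
    with S show "(\<lambda>k. a k * B k) sums s"
      using sums_summation_by_parts_iff by blast
  next
    assume R: "(\<lambda>k. a k * B k) sums s"
    then have "(\<lambda>N. (\<Sum>i\<le>N. a i) * B (Suc N)) \<longlonglongrightarrow> 0"
      by (intro remainder_tendsto_0 disjI2 sums_summable)
    with R show "(\<lambda>k. (\<Sum>i\<le>k. a i) * (B k - B (Suc k))) sums s"
      using sums_summation_by_parts_iff by blast
  qed
qed

lemma suminf_summation_by_parts:
  fixes a :: "nat \<Rightarrow> real"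
  assumes "(\<forall>\<^sub>F k in sequentially. 0 \<le> a k) \<or> (\<forall>\<^sub>F k in sequentially. a k \<le> 0)"
  shows "(\<Sum>k. (\<Sum>i\<le>k. a i) * (B k - B (Suc k))) = (\<Sum>k. a k * B k)"
proof (rule suminf_eq_if_sums_iff)
  fix s
  from assms show "(\<lambda>k. (\<Sum>i\<le>k. a i) * (B k - B (Suc k))) sums s \<longleftrightarrow> (\<lambda>k. a k * B k) sums s"
  proof
    assume "\<forall>\<^sub>F k in sequentially. 0 \<le> a k"
    then show ?thesis
      by (rule sums_summation_by_parts_iff_eventually_nonneg)
  next
    have sums_uminus_iff: "(\<lambda>k. - f k) sums - s \<longleftrightarrow> f sums s" for f :: "nat \<Rightarrow> real"
      using sums_minus[of f s] sums_minus[of "\<lambda>k. - f k" "- s"] by auto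
    assume "\<forall>\<^sub>F k in sequentially. a k \<le> 0"
    then have "\<forall>\<^sub>F k in sequentially. 0 \<le> - a k"
      by simp
    from sums_summation_by_parts_iff_eventually_nonneg[OF this, of "- s"]
    show ?thesis
      by (simp add: sum_negf sums_uminus_iff)
  qed
qed

end

lemma Suc_le_binomial_add:
  assumes "1 \<le> n"
  shows "Suc k \<le> k + n choose n"
proof -
  have "Suc k = Suc k choose k"
    by simp
  also have "\<dots> \<le> k + n choose k"
    using assms by (intro binomial_right_mono) simp
  also have "\<dots> = k + n choose n"
    using binomial_symmetric[of k "k + n"] by simp
  finally show ?thesis .
qed

lemma inverse_binomial_diff:
  "1 / real (k + n choose n) - 1 / real (Suc k + n choose n)
     = real n / (real (k + n choose n) * real (Suc k + n))"
proof -
  have "Suc k * (Suc k + n choose n) = (Suc k + n) * (k + n choose n)"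
    using binomial_absorb_comp[of "Suc (k + n)" n]
    by (simp only: add_Suc Suc_diff_le le_add2 add_diff_cancel_right' diff_Suc_1)
  then have "real (Suc k + n choose n) = real (Suc k + n) * real (k + n choose n) / real (Suc k)"
    by (simp add: field_simps flip: of_nat_mult)
  moreover have "0 < real (k + n choose n)"
    by simp
  moreover have "1 / x - 1 / (m * x / s) = (m - s) / (x * m)" if "0 < x" "0 < s" "0 < m" for x s m :: real
    using that by (simp add: field_simps)
  ultimately show ?thesis
    by simp
qed

lemma decseq_inverse_binomial: "decseq (\<lambda>k. 1 / real (k + n choose n))"
  unfolding decseq_Suc_iff
proof
  fix k
  have "0 \<le> real n / (real (k + n choose n) * real (Suc k + n))"
    by simp
  then show "1 / real (Suc k + n choose n) \<le> 1 / real (k + n choose n)"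
    unfolding inverse_binomial_diff[symmetric] by simp
qed

lemma inverse_binomial_tendsto_zero:
  assumes "1 \<le> n"
  shows "(\<lambda>k. 1 / real (k + n choose n)) \<longlonglongrightarrow> 0"
proof (rule Lim_null_comparison)
  show "\<forall>\<^sub>F k in sequentially. norm (1 / real (k + n choose n)) \<le> inverse (real (Suc k))"
  proof (intro always_eventually allI)
    fix k
    have "real (Suc k) \<le> real (k + n choose n)"
      using Suc_le_binomial_add[OF assms] by (simp only: of_nat_le_iff)
    then show "norm (1 / real (k + n choose n)) \<le> inverse (real (Suc k))"
      by (simp add: divide_simps)
  qed
  show "(\<lambda>k. inverse (real (Suc k))) \<longlonglongrightarrow> 0"
    by (rule LIMSEQ_inverse_real_of_nat)
qed

lemma gen_falling_one_eq_pochhammer: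
  assumes "lam \<noteq> 0"
  shows "(-lam) ^ k * gen_falling 1 (Suc k) (1 / lam) = pochhammer (1 - lam) k"
proof (induction k)
  case 0
  then show ?case
    by (simp add: gen_falling_def)
next
  case (Suc k)
  have "(-lam) ^ Suc k * gen_falling 1 (Suc (Suc k)) (1 / lam)
      = (-lam) ^ k * gen_falling 1 (Suc k) (1 / lam) * (-lam * (1 - real (Suc k) * (1 / lam)))"
    by (simp only: gen_falling_def prod.lessThan_Suc power_Suc mult_ac)
  also have "-lam * (1 - real (Suc k) * (1 / lam)) = 1 - lam + real k"
    using assms by (simp add: field_simps)
  finally show ?case
    by (simp add: Suc.IH pochhammer_Suc)
qed

lemma deg_harm_Suc_eq_sum_pochhammer:
  assumes "lam \<noteq> 0"
  shows "deg_harm (Suc k) lam p = (\<Sum>i\<le>k. pochhammer (1 - lam) i / (fact i * real (Suc i) ^ p))"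
proof -
  have "deg_harm (Suc k) lam p
      = (\<Sum>i\<le>k. (-lam) ^ i * gen_falling 1 (Suc i) (1 / lam) / (real (Suc i) ^ p * fact i))"
    unfolding deg_harm_def atMost_atLeast0 One_nat_def sum.shift_bounds_cl_Suc_ivl by simp
  then show ?thesis
    using gen_falling_one_eq_pochhammer[OF assms] by (simp add: mult.commute)
qed

lemma eventually_pochhammer_nonneg_or_nonpos:
  fixes x :: real
  shows "(\<forall>\<^sub>F k in sequentially. 0 \<le> pochhammer x k) \<or> (\<forall>\<^sub>F k in sequentially. pochhammer x k \<le> 0)"
proof -
  define m where "m = Suc (nat \<lceil>- x\<rceil>)"
  have "0 < x + real m"
    using real_nat_ceiling_ge[of "- x"] unfolding m_def by simp
  then have tail_nonneg: "0 \<le> pochhammer (x + real m) j" for j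
    by (rule pochhammer_nonneg)
  have split: "pochhammer x k = pochhammer x m * pochhammer (x + real m) (k - m)" if "m \<le> k" for k
    using pochhammer_product'[of x m "k - m"] that by simp
  show ?thesis
  proof (cases "0 \<le> pochhammer x m")
    case True
    have "0 \<le> pochhammer x k" if "m \<le> k" for k
      unfolding split[OF that] using True tail_nonneg by (rule mult_nonneg_nonneg)
    then have "\<forall>\<^sub>F k in sequentially. 0 \<le> pochhammer x k"
      by (rule eventually_sequentiallyI)
    then show ?thesis ..
  next
    case False
    have "pochhammer x k \<le> 0" if "m \<le> k" for k
      unfolding split[OF that] using False tail_nonneg by (simp add: mult_nonpos_nonneg)
    then have "\<forall>\<^sub>F k in sequentially. pochhammer x k \<le> 0"
      by (rule eventually_sequentiallyI)
    then show ?thesis ..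
  qed
qed
theorem theorem4:
  fixes lam :: real and p n :: nat
  assumes "lam \<noteq> 0" and "p \<ge> 1" and "n \<ge> 1"
  shows "(\<Sum>k. real n * deg_harm (k+1) lam p
            / (real ((k+1) + n - 1 choose n) * real ((k+1) + n)))
         = (\<Sum>k. (-lam)^k * gen_falling 1 (k+1) (1/lam)
            / (fact k * real (k+1) ^ p * real ((k+1) + n - 1 choose n)))"
proof -
  define a where "a k = pochhammer (1 - lam) k / (fact k * real (Suc k) ^ p)" for k
  define B where "B = (\<lambda>k. 1 / real (k + n choose n))"
  have lhs: "real n * deg_harm (k+1) lam p / (real ((k+1) + n - 1 choose n) * real ((k+1) + n))
      = (\<Sum>i\<le>k. a i) * (B k - B (Suc k))" for k
    using deg_harm_Suc_eq_sum_pochhammer[OF assms(1)] inverse_binomial_diff[of k n]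
    by (simp add: a_def B_def)
  have rhs: "(-lam)^k * gen_falling 1 (k+1) (1/lam) / (fact k * real (k+1) ^ p * real ((k+1) + n - 1 choose n))
      = a k * B k" for k
    using gen_falling_one_eq_pochhammer[OF assms(1), of k] by (simp add: a_def B_def)
  have "(\<forall>\<^sub>F k in sequentially. 0 \<le> a k) \<or> (\<forall>\<^sub>F k in sequentially. a k \<le> 0)"
    using eventually_pochhammer_nonneg_or_nonpos[of "1 - lam"]
  proof (rule disj_forward)
    show "\<forall>\<^sub>F k in sequentially. 0 \<le> a k" if "\<forall>\<^sub>F k in sequentially. 0 \<le> pochhammer (1 - lam) k"
      using that by (rule eventually_mono) (simp add: a_def divide_nonneg_pos)
    show "\<forall>\<^sub>F k in sequentially. a k \<le> 0" if "\<forall>\<^sub>F k in sequentially. pochhammer (1 - lam) k \<le> 0"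
      using that by (rule eventually_mono) (simp add: a_def divide_nonpos_pos)
  qed
  then have "(\<Sum>k. (\<Sum>i\<le>k. a i) * (B k - B (Suc k))) = (\<Sum>k. a k * B k)"
    unfolding B_def
    by (rule suminf_summation_by_parts[OF decseq_inverse_binomial inverse_binomial_tendsto_zero[OF assms(3)]])
  then show ?thesis
    by (simp only: lhs rhs)
qed

end
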